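(* Let $f:\mathbb{R}^d\to\mathbb{R}$ be $C^2$ with $\nabla^2 f(x)\succ0$ for all $x$, and suppose there is $L_{\text{alt}}>0$ with $$f(x+h)-f(x)\le\langle\nabla f(x),h\rangle+\tfrac12\|h\|_x^2+\tfrac{L_{\text{alt}}}{6}\|h\|_x^3\quad\forall x,h\in\mathbb{R}^d.$$ Let $L_{\text{est}}\ge L_{\text{alt}}$ and let $x_{k+1}$ be the AICN iterate from $x_k$ with $\nabla f(x_k)\neq0$; write $g=\|\nabla f(x_k)\|_{x_k}^*$. Then - if $g\ge\frac{4}{L_{\text{est}}}$: $f(x_{k+1})-f(x_k)\le-\frac{1}{2\sqrt{L_{\text{est}}}}g^{3/2}$; - if $g\le\frac{4}{L_{\text{est}}}$: $f(x_{k+1})-f(x_k)\le-\frac14g^2$; - if $0<c_1\le1$ and $g\ge\frac{4c_1}{L_{\text{est}}}$: $f(x_{k+1})-f(x_k)\le-\frac{\sqrt{c_1}}{2\sqrt{L_{\text{est}}}}g^{3/2}$.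
   Context: Local norms: $\|h\|_x=\langle\nabla^2 f(x)h,h\rangle^{1/2}$, $\|g\|_x^*=\langle g,[\nabla^2 f(x)]^{-1}g\rangle^{1/2}$. AICN step with parameter $L_{\text{est}}>0$: $x_{k+1}=x_k-\alpha_k[\nabla^2 f(x_k)]^{-1}\nabla f(x_k)$ with $\alpha_k=\frac{-1+\sqrt{1+2L_{\text{est}}\|\nabla f(x_k)\|_{x_k}^*}}{L_{\text{est}}\|\nabla f(x_k)\|_{x_k}^*}$. *)

theory Defs
  imports "HOL-Analysis.Analysis"
begin

definition local_norm :: "(real^'a \<Rightarrow> real^'a^'a) \<Rightarrow> real^'a \<Rightarrow> real^'a \<Rightarrow> real" where
  "local_norm H x h = sqrt ((H x *v h) \<bullet> h)"

definition dual_norm :: "(real^'a \<Rightarrow> real^'a^'a) \<Rightarrow> real^'a \<Rightarrow> real^'a \<Rightarrow> real" where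
  "dual_norm H x g = sqrt (g \<bullet> (matrix_inv (H x) *v g))"

definition aicn_alpha :: "real \<Rightarrow> real \<Rightarrow> real" where
  "aicn_alpha L gn = (-1 + sqrt (1 + 2 * L * gn)) / (L * gn)"

definition aicn_step ::
  "(real^'a \<Rightarrow> real^'a) \<Rightarrow> (real^'a \<Rightarrow> real^'a^'a) \<Rightarrow> real \<Rightarrow> real^'a \<Rightarrow> real^'a" where
  "aicn_step G H L x =
     x - aicn_alpha L (dual_norm H x (G x)) *\<^sub>R (matrix_inv (H x) *v G x)"

end

theory Submission
  imports Defs
begin

(* Along the Newton direction d = H(x)^-1 G(x) one has <G(x), d> = ||d||_x^2 = g^2, so the
   cubic upper model bounds the change of f under the step x - a d by
   -a g^2 + a^2 g^2 / 2 + L a^3 g^3 / 6.  The AICN step size a is the positive root of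
   L g a^2 = 2 - 2a, which collapses this bound to -a (4 - a) g^2 / 6 <= -a g^2 / 2.  The three
   claims then follow from lower bounds on a = 2 / (1 + sqrt (1 + 2 L g)) in the regimes
   L g <= 4 and L g >= 4c. *)

lemma posdef_matrix_mul_inv:
  fixes A :: "real^'n^'n"
  assumes pd: "\<And>h. h \<noteq> 0 \<Longrightarrow> (A *v h) \<bullet> h > 0"
  shows "A ** matrix_inv A = mat 1"
proof -
  have "\<forall>x. A *v x = 0 \<longrightarrow> x = 0" using pd by fastforce
  then obtain B where B: "B ** A = mat 1" using matrix_left_invertible_ker by blast
  then have "A ** B = mat 1" using matrix_left_right_inverse by blast
  with B have "\<exists>A'. A ** A' = mat 1 \<and> A' ** A = mat 1" by blast
  then show ?thesis unfolding matrix_inv_def by (metis (mono_tags, lifting) someI_ex)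
qed

lemma aicn_alpha_conv:
  assumes "L * g > 0"
  shows "aicn_alpha L g = 2 / (1 + sqrt (1 + 2 * L * g))"
proof -
  define s where "s = sqrt (1 + 2 * L * g)"
  have "0 \<le> 1 + 2 * L * g" using assms by simp
  then have "s\<^sup>2 = 1 + 2 * L * g" "s \<ge> 0" by (simp_all add: s_def)
  then have "(s - 1) * (1 + s) = 2 * (L * g)" "s \<ge> 0" by (simp_all add: algebra_simps power2_eq_square)
  moreover have "L \<noteq> 0" "g \<noteq> 0" using assms by auto
  ultimately show ?thesis
    using assms unfolding aicn_alpha_def s_def[symmetric] by (simp add: field_simps)
qed

lemma aicn_alpha_pos_le_one:
  assumes "L * g > 0"
  shows "0 < aicn_alpha L g" "aicn_alpha L g \<le> 1"
proof -
  define s where "s = sqrt (1 + 2 * L * g)"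
  have "1 \<le> 1 + 2 * L * g" using assms by simp
  then have "1 \<le> s" by (simp add: s_def)
  moreover have "aicn_alpha L g = 2 / (1 + s)" using aicn_alpha_conv[OF assms] by (simp add: s_def)
  ultimately show "0 < aicn_alpha L g" "aicn_alpha L g \<le> 1" by simp_all
qed

lemma aicn_alpha_quadratic:
  assumes "L * g > 0"
  shows "L * g * (aicn_alpha L g)\<^sup>2 = 2 - 2 * aicn_alpha L g"
proof -
  define s where "s = sqrt (1 + 2 * L * g)"
  have "0 \<le> 1 + 2 * L * g" using assms by simp
  then have "s\<^sup>2 = 1 + 2 * L * g" "s \<ge> 0" by (simp_all add: s_def)
  then show ?thesis
    using assms unfolding aicn_alpha_conv[OF assms] s_def[symmetric]
    by (simp add: field_simps power2_eq_square)
qed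

lemma aicn_cubic_model_le:
  fixes L L' g :: real
  assumes "L > 0" "g > 0" "0 \<le> L'" "L' \<le> L"
  defines "\<alpha> \<equiv> aicn_alpha L g"
  shows "- \<alpha> * g\<^sup>2 + 1/2 * (\<alpha> * g)\<^sup>2 + L'/6 * (\<alpha> * g)^3 \<le> - \<alpha> * g\<^sup>2 / 2"
proof -
  have Lg: "L * g > 0" using assms by simp
  have \<alpha>: "0 < \<alpha>" "\<alpha> \<le> 1" using aicn_alpha_pos_le_one[OF Lg] by (simp_all add: \<alpha>_def)
  have "L'/6 * (\<alpha> * g)^3 \<le> L/6 * (\<alpha> * g)^3"
    using assms \<alpha> by (intro mult_right_mono) auto
  also have "\<dots> = g\<^sup>2 * (L * g * \<alpha>\<^sup>2) * \<alpha> / 6"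
    by (simp add: power3_eq_cube power2_eq_square)
  also have "\<dots> = g\<^sup>2 * (2 - 2 * \<alpha>) * \<alpha> / 6"
    using aicn_alpha_quadratic[OF Lg] by (simp add: \<alpha>_def)
  finally have "- \<alpha> * g\<^sup>2 + 1/2 * (\<alpha> * g)\<^sup>2 + L'/6 * (\<alpha> * g)^3 \<le> g\<^sup>2 * (- \<alpha> * (4 - \<alpha>) / 6)"
    by (simp add: power2_eq_square algebra_simps)
  also have "\<dots> \<le> g\<^sup>2 * (- \<alpha> / 2)"
    using \<alpha> by (intro mult_left_mono) (auto simp: field_simps)
  finally show ?thesis by (simp add: mult.commute)
qed

lemma aicn_alpha_ge_half:
  assumes "L > 0" "g > 0" "g \<le> 4 / L"
  shows "1/2 \<le> aicn_alpha L g"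
proof -
  define s where "s = sqrt (1 + 2 * L * g)"
  have "L * g \<le> 4" using assms by (simp add: field_simps)
  then have "s \<le> sqrt (3\<^sup>2)" unfolding s_def by (intro real_sqrt_le_mono) simp
  moreover have "0 \<le> s" using assms by (simp add: s_def)
  ultimately have "2 / 4 \<le> 2 / (1 + s)" by (intro divide_left_mono) auto
  then show ?thesis using assms by (simp add: aicn_alpha_conv s_def)
qed

lemma aicn_alpha_sqrt_lower:
  assumes "L > 0" "0 < c" "c \<le> 1" "4 * c / L \<le> g"
  shows "sqrt c / sqrt L \<le> aicn_alpha L g * sqrt g"
proof -
  define u where "u = L * g"
  define s where "s = sqrt (1 + 2 * u)"
  have cu: "4 * c \<le> u" using assms by (simp add: u_def field_simps)
  then have u: "u > 0" using assms by simp
  have "sqrt (4 * c) \<le> sqrt u" using cu by simp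
  then have e1: "2 * sqrt c \<le> sqrt u" by (simp add: real_sqrt_mult)
  have "c * u \<le> u" using mult_right_mono[OF \<open>c \<le> 1\<close>, of u] u by simp
  then have "c * (1 + 2 * u) \<le> 9/4 * u" using cu by (simp add: algebra_simps)
  then have "sqrt (c * (1 + 2 * u)) \<le> sqrt ((3/2)\<^sup>2 * u)" by (simp add: power2_eq_square)
  then have e2: "sqrt c * s \<le> 3/2 * sqrt u" using u by (simp add: s_def real_sqrt_mult)
  have "sqrt c * (1 + s) \<le> 2 * sqrt u" using e1 e2 by (simp add: algebra_simps)
  moreover have "aicn_alpha L g * sqrt g * sqrt L = 2 * sqrt u / (1 + s)"
    using u by (simp add: aicn_alpha_conv u_def s_def real_sqrt_mult mult.assoc)
  moreover have "s \<ge> 0" using u by (simp add: s_def)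
  ultimately have "sqrt c * (1 + s) \<le> (aicn_alpha L g * sqrt g * sqrt L) * (1 + s)"
    by (simp add: field_simps)
  then have "sqrt c \<le> aicn_alpha L g * sqrt g * sqrt L"
    by (rule mult_right_le_imp_le) (use \<open>s \<ge> 0\<close> in simp)
  then show ?thesis using assms by (simp add: field_simps)
qed

lemma aicn_step_decrease:
  fixes G :: "real^'n \<Rightarrow> real^'n" and H :: "real^'n \<Rightarrow> real^'n^'n"
  assumes pd: "\<And>h. h \<noteq> 0 \<Longrightarrow> (H x *v h) \<bullet> h > 0"
    and upper: "\<And>h. f (x + h) - f x \<le> G x \<bullet> h + 1/2 * (local_norm H x h)\<^sup>2
                          + L' / 6 * (local_norm H x h)^3"
    and "0 \<le> L'" "L' \<le> L" "L > 0" "G x \<noteq> 0"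
  defines "g \<equiv> dual_norm H x (G x)"
  shows "g > 0" "f (aicn_step G H L x) - f x \<le> - aicn_alpha L g * g\<^sup>2 / 2"
proof -
  define d where "d = matrix_inv (H x) *v G x"
  have Hd: "H x *v d = G x"
    using posdef_matrix_mul_inv[OF pd] by (simp add: d_def matrix_vector_mul_assoc)
  then have "d \<noteq> 0" using \<open>G x \<noteq> 0\<close> by auto
  then have "G x \<bullet> d > 0" using pd Hd by force
  moreover have "g = sqrt (G x \<bullet> d)" by (simp add: g_def dual_norm_def d_def)
  ultimately have gd: "G x \<bullet> d = g\<^sup>2" by simp
  show g: "g > 0" using \<open>G x \<bullet> d > 0\<close> \<open>g = sqrt (G x \<bullet> d)\<close> by simp
  define \<alpha> where "\<alpha> = aicn_alpha L g"
  have "\<alpha> > 0" using aicn_alpha_pos_le_one \<open>L > 0\<close> g by (simp add: \<alpha>_def)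
  define h where "h = (- \<alpha>) *\<^sub>R d"
  have step: "aicn_step G H L x = x + h"
    by (simp add: aicn_step_def h_def \<alpha>_def g_def d_def)
  have "H x *v h = (- \<alpha>) *\<^sub>R G x" unfolding h_def matrix_vector_mult_scaleR Hd ..
  then have "(H x *v h) \<bullet> h = (\<alpha> * g)\<^sup>2" using gd by (simp add: h_def power2_eq_square)
  then have norm_h: "local_norm H x h = \<alpha> * g" using \<open>\<alpha> > 0\<close> g by (simp add: local_norm_def)
  have grad_h: "G x \<bullet> h = - \<alpha> * g\<^sup>2" using gd by (simp add: h_def)
  have "f (x + h) - f x \<le> - \<alpha> * g\<^sup>2 + 1/2 * (\<alpha> * g)\<^sup>2 + L'/6 * (\<alpha> * g)^3"
    using upper[of h] unfolding norm_h grad_h .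
  then show "f (aicn_step G H L x) - f x \<le> - \<alpha> * g\<^sup>2 / 2"
    using aicn_cubic_model_le[OF \<open>L > 0\<close> g \<open>0 \<le> L'\<close> \<open>L' \<le> L\<close>]
    unfolding step \<alpha>_def by linarith
qed

lemma three_halves_decrease:
  fixes g \<alpha> L c D :: real
  assumes "g > 0" "D \<le> - \<alpha> * g\<^sup>2 / 2" "sqrt c / sqrt L \<le> \<alpha> * sqrt g"
  shows "D \<le> - (sqrt c / (2 * sqrt L)) * g powr (3/2)"
proof -
  have "g powr (3/2) = g * sqrt g"
    using \<open>g > 0\<close> powr_add[of g 1 "1/2"] by (simp add: powr_half_sqrt)
  moreover have "sqrt c / sqrt L * (g * sqrt g) \<le> \<alpha> * sqrt g * (g * sqrt g)"
    using assms by (intro mult_right_mono) auto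
  moreover have "\<alpha> * sqrt g * (g * sqrt g) = \<alpha> * g\<^sup>2"
    using \<open>g > 0\<close> by (simp add: power2_eq_square)
  ultimately show ?thesis using assms(2) by simp
qed

theorem lemma11:
  fixes f :: "real^'d \<Rightarrow> real"
    and G :: "real^'d \<Rightarrow> real^'d"
    and H :: "real^'d \<Rightarrow> real^'d^'d"
    and L_alt L_est :: real
    and xk :: "real^'d"
  assumes grad: "\<And>x. (f has_derivative (\<lambda>h. G x \<bullet> h)) (at x)"
    and hess: "\<And>x. (G has_derivative (\<lambda>h. H x *v h)) (at x)"
    and hess_cont: "continuous_on UNIV H"
    and pd: "\<And>x h. h \<noteq> 0 \<Longrightarrow> (H x *v h) \<bullet> h > 0"
    and L_alt_pos: "L_alt > 0"
    and upper: "\<And>x h. f (x + h) - f x \<le> G x \<bullet> h + 1/2 * (local_norm H x h)^2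
                          + L_alt / 6 * (local_norm H x h)^3"
    and L_est_ge: "L_est \<ge> L_alt"
    and nz: "G xk \<noteq> 0"
  shows "(let g = dual_norm H xk (G xk); xk1 = aicn_step G H L_est xk in
           (g \<ge> 4 / L_est \<longrightarrow>
              f xk1 - f xk \<le> - (1 / (2 * sqrt L_est)) * g powr (3/2)) \<and>
           (g \<le> 4 / L_est \<longrightarrow> f xk1 - f xk \<le> - (1/4) * g^2) \<and>
           (\<forall>c1. 0 < c1 \<and> c1 \<le> 1 \<and> g \<ge> 4 * c1 / L_est \<longrightarrow>
              f xk1 - f xk \<le> - (sqrt c1 / (2 * sqrt L_est)) * g powr (3/2)))"
proof -
  define g where "g = dual_norm H xk (G xk)"
  define D where "D = f (aicn_step G H L_est xk) - f xk"
  have L: "L_est > 0" using L_alt_pos L_est_ge by simp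
  have g: "g > 0" and dec: "D \<le> - aicn_alpha L_est g * g\<^sup>2 / 2"
    using aicn_step_decrease[of H xk f G L_alt L_est] pd upper L_alt_pos L_est_ge L nz
    unfolding g_def D_def by auto
  have large: "D \<le> - (sqrt c / (2 * sqrt L_est)) * g powr (3/2)"
    if "0 < c" "c \<le> 1" "4 * c / L_est \<le> g" for c
    using three_halves_decrease[OF g dec aicn_alpha_sqrt_lower[OF L that]] .
  have small: "D \<le> - (1/4) * g\<^sup>2" if "g \<le> 4 / L_est"
    using dec mult_right_mono[OF aicn_alpha_ge_half[OF L g that], of "g\<^sup>2"] by simp
  show ?thesis
    unfolding Let_def g_def[symmetric] D_def[symmetric]
    using small large[of 1] large by auto
qed

end
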